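(* Let $AP$ be a finite set, $p\in AP$, and let $\mathcal{A}=(2^{AP},Q,\delta,q_0,H,H_\exists,\Omega)$ be an HFTA that is nondeterministic in one path, with $Q_\ell$ the existential component containing $q_0$. Let $\exists^{C}p.\mathcal{A}=(2^{AP\setminus\{p\}},Q,\delta',q_0,H,H_\exists,\Omega)$, where for $q\in Q$ and $a\subseteq AP\setminus\{p\}$, $\delta'(q,a)=\delta(q,a)$ if $q\notin Q_\ell$ and $\delta'(q,a)=\delta(q,a)\vee\delta(q,a\cup\{p\})$ if $q\in Q_\ell$. Then $\mathcal{L}(\exists^{C}p.\mathcal{A})=\exists^{C}p.\mathcal{L}(\mathcal{A})$.
   Context: Trees: for a nonempty set $D$, a tree is a nonempty prefix-closed $T\subseteq D^*$ with root $\varepsilon$; children of $w$ are nodes $w\cdot d\in T$; non-blocking: every node has a child; an infinite path from the root is a sequence $\pi(0)\pi(1)\cdots$ with $\pi(0)=\varepsilon$ and $\pi(k+1)$ a child of $\pi(k)$. A Kripke tree over $AP$ is a non-blocking tree with $\mathit{Lab}:T\to2^{AP}$. Chain projection: for a set $L$ of Kripke trees over $AP$ and $p\in AP$, $\exists^{C}p.L$ is the set of Kripke trees $(T,\mathit{Lab})$ over $AP\setminus\{p\}$ for which there are an infinite path $\pi$ of $T$ from the root and a Kripke tree $(T,\mathit{Lab}')\in L$ such that $\mathit{Lab}'(w)=\mathit{Lab}(w)$ for nodes $w$ not on $\pi$ and $\mathit{Lab}'(w)\setminus\{p\}=\mathit{Lab}(w)$ for nodes $w$ on $\pi$. First-order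 one-step logic: for finite $Q$, a one-step interpretation is $(S,I)$, $S\neq\emptyset$, $I:S\to2^Q$; first-order $Q$-constraints are sentences of $\theta::=\top\mid\bot\mid q(x)\mid x=y\mid x\neq y\mid\theta\vee\theta\mid\theta\wedge\theta\mid\exists x.\theta\mid\forall x.\theta$ interpreted over $S$ with $q(x)$ true iff $q\in I(x)$. A $Q$-type is a set $A\subseteq Q$, with $t(A)(x):=\bigwedge_{q\in A}q(x)$ ($\top$ if $A=\emptyset$). For sets $T_\exists=\{A_1,\dots,A_n\}$ and $T_\forall$ of $Q$-types, the basic formula $\theta^{=}(T_\exists,T_\forall)$ is $\exists x_1\dots\exists x_n.(\mathrm{diff}(x_1,\dots,x_n)\wedge\bigwedge_{i=1}^n t(A_i)(x_i)\wedge\forall y.(\mathrm{diff}(x_1,\dots,x_n,y)\to\bigvee_{A\in T_\forall}t(A)(y)))$, where $\mathrm{diff}(z_1,\dots,z_k):=\bigwedge_{i\neq j}z_i\neq z_j$. For nonempty $Q'\subseteq Q$, $\theta^{=}(T_\exists,T_\forall)$ is $Q'$-functional in one direction if some $A\in T_\exists$ is a singleton $\{q\}$ with $q\in Q'$ and every $B\in(T_\exists\setminus\{A\})\cup T_\forall$ is disjoint from $Q'$; a first-order $Q$-constraint is $Q'$-functional in one direction if it is a disjunction of basic formulas that are. FTA $(\Sigma,Q,\delta,q_0,\Omega)$: $\delta$ maps $Q\times\Sigma$ to first-order $Q$-constraints. A run on a non-blocking $\Sigma$-labelled tree $(T,\mathit{Lab})$ is a $(Q\times T)$-labelled tree $(T_r,\mathit{Lab}_r)$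 with $\mathit{Lab}_r(\varepsilon)=(q_0,\varepsilon)$ in which each node $y$ with $\mathit{Lab}_r(y)=(q,w)$ has children whose labels are exactly $\{(q',w'):w'\in S_w,q'\in I(w')\}$ for some $(S_w,I)\models\delta(q,\mathit{Lab}(w))$, $S_w$ the children of $w$; a node $y$ reads $w$ if $\mathit{Lab}_r(y)=(q,w)$ for some $q$. It is accepting if along every infinite path from the root of $T_r$ the highest colour seen infinitely often is even; $\mathcal{L}$ is the set of trees with an accepting run. HFTA $(\Sigma,Q,\delta,q_0,H,H_\exists,\Omega)$: FTA with ordered partition $H=\langle Q_1,\dots,Q_n\rangle$ of $Q$ (order of $Q_i$ is $i$), each component existential (those in $H_\exists$), universal or transient: transient $Q_i$: $\delta(q,a)$ mentions only states of order $<i$; existential $Q_i$: $\delta(q,a)$ is a disjunction of $\exists x.(q'(x)\wedge\theta(x))$, $q'\in Q_i$, $\theta(x)$ mentioning only states of order $<i$; universal $Q_i$: conjunction of $\forall x.(q'(x)\vee\theta(x))$ likewise; $\Omega$ on an existential (universal) component has values in $\{m-1,m\}$, $m$ even (odd). An HFTA is nondeterministic in one path if $q_0$ lies in an existential component $Q_\ell$ and (1) for all $q\in Q_\ell$, $a\in\Sigma$, $\delta(q,a)$ is $Q_\ell$-functional in one direction; (2) for every $\mathcal{T}\in\mathcal{L}(\mathcal{A})$ and every infinite path $\pi$ of $\mathcal{T}$ from the root, there is an accepting run such that for each node $w$ on $\pi$ exactly one node of the run reads $w$, and its state belongs to $Q_\ell$. *)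

theory Defs
  imports Main
begin

definition is_tree :: "'d list set \<Rightarrow> bool" where
  "is_tree T \<longleftrightarrow> T \<noteq> {} \<and> (\<forall>w v. w @ v \<in> T \<longrightarrow> w \<in> T)"

definition children :: "'d list set \<Rightarrow> 'd list \<Rightarrow> 'd list set" where
  "children T w = {w @ [d] | d. w @ [d] \<in> T}"

definition non_blocking :: "'d list set \<Rightarrow> bool" where
  "non_blocking T \<longleftrightarrow> is_tree T \<and> (\<forall>w\<in>T. children T w \<noteq> {})"

definition inf_path :: "'d list set \<Rightarrow> (nat \<Rightarrow> 'd list) \<Rightarrow> bool" where
  "inf_path T \<pi> \<longleftrightarrow> \<pi> 0 = [] \<and> (\<forall>k. \<pi> (Suc k) \<in> children T (\<pi> k))"

text \<open>A Kripke tree over AP is a pair (T, Lab); only the values of Lab on T matter.\<close>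
definition kripke_tree :: "'ap set \<Rightarrow> 'd list set \<Rightarrow> ('d list \<Rightarrow> 'ap set) \<Rightarrow> bool" where
  "kripke_tree AP T Lab \<longleftrightarrow> non_blocking T \<and> (\<forall>w\<in>T. Lab w \<subseteq> AP)"

definition chain_proj ::
  "'ap set \<Rightarrow> 'ap \<Rightarrow> ('d list set \<times> ('d list \<Rightarrow> 'ap set)) set
     \<Rightarrow> ('d list set \<times> ('d list \<Rightarrow> 'ap set)) set" where
  "chain_proj AP p L = {(T, Lab). kripke_tree (AP - {p}) T Lab \<and>
     (\<exists>\<pi> Lab'. inf_path T \<pi> \<and> (T, Lab') \<in> L \<and>
        (\<forall>w\<in>T. w \<notin> range \<pi> \<longrightarrow> Lab' w = Lab w) \<and>
        (\<forall>w\<in>T. w \<in> range \<pi> \<longrightarrow> Lab' w - {p} = Lab w))}"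

datatype 'q fo = Top | Bot | Atom 'q nat | Eq nat nat | Neq nat nat
  | Or "'q fo" "'q fo" | And "'q fo" "'q fo" | Ex nat "'q fo" | All nat "'q fo"

fun sat :: "'s set \<Rightarrow> ('s \<Rightarrow> 'q set) \<Rightarrow> (nat \<Rightarrow> 's) \<Rightarrow> 'q fo \<Rightarrow> bool" where
  "sat S I e Top = True"
| "sat S I e Bot = False"
| "sat S I e (Atom q x) = (q \<in> I (e x))"
| "sat S I e (Eq x y) = (e x = e y)"
| "sat S I e (Neq x y) = (e x \<noteq> e y)"
| "sat S I e (Or \<phi> \<psi>) = (sat S I e \<phi> \<or> sat S I e \<psi>)"
| "sat S I e (And \<phi> \<psi>) = (sat S I e \<phi> \<and> sat S I e \<psi>)"
| "sat S I e (Ex x \<phi>) = (\<exists>s\<in>S. sat S I (e(x := s)) \<phi>)"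
| "sat S I e (All x \<phi>) = (\<forall>s\<in>S. sat S I (e(x := s)) \<phi>)"

fun fv :: "'q fo \<Rightarrow> nat set" where
  "fv Top = {}" | "fv Bot = {}" | "fv (Atom q x) = {x}" | "fv (Eq x y) = {x, y}"
| "fv (Neq x y) = {x, y}" | "fv (Or \<phi> \<psi>) = fv \<phi> \<union> fv \<psi>" | "fv (And \<phi> \<psi>) = fv \<phi> \<union> fv \<psi>"
| "fv (Ex x \<phi>) = fv \<phi> - {x}" | "fv (All x \<phi>) = fv \<phi> - {x}"

fun atoms :: "'q fo \<Rightarrow> 'q set" where
  "atoms Top = {}" | "atoms Bot = {}" | "atoms (Atom q x) = {q}" | "atoms (Eq x y) = {}"
| "atoms (Neq x y) = {}" | "atoms (Or \<phi> \<psi>) = atoms \<phi> \<union> atoms \<psi>"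
| "atoms (And \<phi> \<psi>) = atoms \<phi> \<union> atoms \<psi>"
| "atoms (Ex x \<phi>) = atoms \<phi>" | "atoms (All x \<phi>) = atoms \<phi>"

definition models :: "'s set \<Rightarrow> ('s \<Rightarrow> 'q set) \<Rightarrow> 'q fo \<Rightarrow> bool" where
  "models S I \<phi> \<longleftrightarrow> S \<noteq> {} \<and> (\<forall>e. (\<forall>x. e x \<in> S) \<longrightarrow> sat S I e \<phi>)"

text \<open>Logical equivalence of sentences (over all one-step interpretations with
  domains of natural numbers, which suffices for this monadic logic).\<close>
definition fo_equiv :: "'q fo \<Rightarrow> 'q fo \<Rightarrow> bool" where
  "fo_equiv \<phi> \<psi> \<longleftrightarrow> (\<forall>(S::nat set) I. S \<noteq> {} \<longrightarrow> (models S I \<phi> \<longleftrightarrow> models S I \<psi>))"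

fun big_and :: "'q fo list \<Rightarrow> 'q fo" where
  "big_and [] = Top" | "big_and [\<phi>] = \<phi>" | "big_and (\<phi> # \<psi>s) = And \<phi> (big_and \<psi>s)"

fun big_or :: "'q fo list \<Rightarrow> 'q fo" where
  "big_or [] = Bot" | "big_or [\<phi>] = \<phi>" | "big_or (\<phi> # \<psi>s) = Or \<phi> (big_or \<psi>s)"

definition type_fo :: "'q set \<Rightarrow> nat \<Rightarrow> 'q fo" where
  "type_fo A x = big_and (map (\<lambda>q. Atom q x) (SOME qs. set qs = A \<and> distinct qs))"

definition diff_fo :: "nat list \<Rightarrow> 'q fo" where
  "diff_fo zs = big_and [Neq (zs ! i) (zs ! j). i \<leftarrow> [0..<length zs], j \<leftarrow> [0..<length zs], i \<noteq> j]"

text \<open>The basic formula theta^=(T_ex, T_all), with T_ex = {A_1,...,A_n} enumerated as the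
  list Te; x_i is variable i-1 and y is variable n.  The implication
  diff(x_1..x_n,y) --> phi is written as (y = x_1 \/ ... \/ y = x_n \/ phi).\<close>
definition basic_fo :: "'q set list \<Rightarrow> 'q set list \<Rightarrow> 'q fo" where
  "basic_fo Te Tf = (let n = length Te in
     foldr Ex [0..<n]
       (big_and [diff_fo [0..<n],
                 big_and [type_fo (Te ! i) i. i \<leftarrow> [0..<n]],
                 All n (big_or ([Eq n i. i \<leftarrow> [0..<n]] @ [big_or [type_fo A n. A \<leftarrow> Tf]]))]))"

definition basic_functional :: "'q set \<Rightarrow> 'q set \<Rightarrow> 'q set list \<Rightarrow> 'q set list \<Rightarrow> bool" where
  "basic_functional Q Q' Te Tf \<longleftrightarrow> distinct Te \<and> (\<forall>A \<in> set Te \<union> set Tf. A \<subseteq> Q) \<and>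
     (\<exists>A \<in> set Te. \<exists>q \<in> Q'. A = {q} \<and>
        (\<forall>B \<in> (set Te - {A}) \<union> set Tf. B \<inter> Q' = {}))"

definition functional_one_dir :: "'q set \<Rightarrow> 'q set \<Rightarrow> 'q fo \<Rightarrow> bool" where
  "functional_one_dir Q Q' \<theta> \<longleftrightarrow> Q' \<noteq> {} \<and> Q' \<subseteq> Q \<and>
     (\<exists>bs. bs \<noteq> [] \<and> (\<forall>(Te, Tf) \<in> set bs. basic_functional Q Q' Te Tf) \<and>
        fo_equiv \<theta> (big_or (map (\<lambda>(Te, Tf). basic_fo Te Tf) bs)))"

inductive is_disj :: "('q fo \<Rightarrow> bool) \<Rightarrow> 'q fo \<Rightarrow> bool" for P where
  "P \<phi> \<Longrightarrow> is_disj P \<phi>"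
| "is_disj P \<phi> \<Longrightarrow> is_disj P \<psi> \<Longrightarrow> is_disj P (Or \<phi> \<psi>)"

inductive is_conj :: "('q fo \<Rightarrow> bool) \<Rightarrow> 'q fo \<Rightarrow> bool" for P where
  "P \<phi> \<Longrightarrow> is_conj P \<phi>"
| "is_conj P \<phi> \<Longrightarrow> is_conj P \<psi> \<Longrightarrow> is_conj P (And \<phi> \<psi>)"

record ('a, 'q) fta =
  alph :: "'a set"
  states :: "'q set"
  delta :: "'q \<Rightarrow> 'a \<Rightarrow> 'q fo"
  init :: 'q
  colour :: "'q \<Rightarrow> nat"

definition wf_fta :: "('a, 'q, 'z) fta_scheme \<Rightarrow> bool" where
  "wf_fta A \<longleftrightarrow> finite (states A) \<and> init A \<in> states A \<and>
     (\<forall>q\<in>states A. \<forall>a\<in>alph A. fv (delta A q a) = {} \<and> atoms (delta A q a) \<subseteq> states A)"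

definition is_run :: "('a, 'q, 'z) fta_scheme \<Rightarrow> 'd list set \<Rightarrow> ('d list \<Rightarrow> 'a)
     \<Rightarrow> ('q \<times> 'd) list set \<Rightarrow> (('q \<times> 'd) list \<Rightarrow> 'q \<times> 'd list) \<Rightarrow> bool" where
  "is_run A T Lab Tr Lr \<longleftrightarrow> is_tree Tr \<and> Lr [] = (init A, []) \<and>
     (\<forall>y\<in>Tr. Lr y \<in> states A \<times> T \<and>
        (\<exists>I. (\<forall>w'\<in>children T (snd (Lr y)). I w' \<subseteq> states A) \<and>
             models (children T (snd (Lr y))) I (delta A (fst (Lr y)) (Lab (snd (Lr y)))) \<and>
             Lr ` children Tr y = {(q', w'). w' \<in> children T (snd (Lr y)) \<and> q' \<in> I w'}))"

definition accepting_run :: "('a, 'q, 'z) fta_scheme \<Rightarrow> 'd list set \<Rightarrow> ('d list \<Rightarrow> 'a)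
     \<Rightarrow> ('q \<times> 'd) list set \<Rightarrow> (('q \<times> 'd) list \<Rightarrow> 'q \<times> 'd list) \<Rightarrow> bool" where
  "accepting_run A T Lab Tr Lr \<longleftrightarrow> is_run A T Lab Tr Lr \<and>
     (\<forall>\<pi>. inf_path Tr \<pi> \<longrightarrow>
        even (Max {c. infinite {k. colour A (fst (Lr (\<pi> k))) = c}}))"

definition lang :: "('a, 'q, 'z) fta_scheme \<Rightarrow> ('d list set \<times> ('d list \<Rightarrow> 'a)) set" where
  "lang A = {(T, Lab). non_blocking T \<and> (\<forall>w\<in>T. Lab w \<in> alph A) \<and>
     (\<exists>Tr Lr. accepting_run A T Lab Tr Lr)}"

text \<open>Hierarchical FTA: an FTA with an ordered partition (list of components, the order of
  component i is its index) and the set of existential components.\<close>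
record ('a, 'q) hfta = "('a, 'q) fta" +
  parts :: "'q set list"
  ex_parts :: "'q set set"

definition lower :: "('a, 'q, 'z) hfta_scheme \<Rightarrow> nat \<Rightarrow> 'q set" where
  "lower A i = (\<Union>j<i. parts A ! j)"

definition existential_comp :: "('a, 'q, 'z) hfta_scheme \<Rightarrow> nat \<Rightarrow> bool" where
  "existential_comp A i \<longleftrightarrow>
     (\<forall>q\<in>parts A ! i. \<forall>a\<in>alph A. is_disj (\<lambda>\<phi>. \<exists>x q' \<theta>. \<phi> = Ex x (And (Atom q' x) \<theta>) \<and>
         q' \<in> parts A ! i \<and> atoms \<theta> \<subseteq> lower A i) (delta A q a)) \<and>
     (\<exists>m. even m \<and> (\<forall>q\<in>parts A ! i. colour A q \<in> {m - 1, m}))"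

definition universal_comp :: "('a, 'q, 'z) hfta_scheme \<Rightarrow> nat \<Rightarrow> bool" where
  "universal_comp A i \<longleftrightarrow>
     (\<forall>q\<in>parts A ! i. \<forall>a\<in>alph A. is_conj (\<lambda>\<phi>. \<exists>x q' \<theta>. \<phi> = All x (Or (Atom q' x) \<theta>) \<and>
         q' \<in> parts A ! i \<and> atoms \<theta> \<subseteq> lower A i) (delta A q a)) \<and>
     (\<exists>m. odd m \<and> (\<forall>q\<in>parts A ! i. colour A q \<in> {m - 1, m}))"

definition transient_comp :: "('a, 'q, 'z) hfta_scheme \<Rightarrow> nat \<Rightarrow> bool" where
  "transient_comp A i \<longleftrightarrow> (\<forall>q\<in>parts A ! i. \<forall>a\<in>alph A. atoms (delta A q a) \<subseteq> lower A i)"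

definition is_hfta :: "('a, 'q, 'z) hfta_scheme \<Rightarrow> bool" where
  "is_hfta A \<longleftrightarrow> wf_fta A \<and>
     (\<forall>i<length (parts A). parts A ! i \<noteq> {}) \<and>
     (\<forall>i<length (parts A). \<forall>j<length (parts A). i \<noteq> j \<longrightarrow> parts A ! i \<inter> parts A ! j = {}) \<and>
     \<Union>(set (parts A)) = states A \<and>
     ex_parts A \<subseteq> set (parts A) \<and>
     (\<forall>i<length (parts A).
        (parts A ! i \<in> ex_parts A \<longrightarrow> existential_comp A i) \<and>
        (parts A ! i \<notin> ex_parts A \<longrightarrow> universal_comp A i \<or> transient_comp A i))"

text \<open>Nondeterministic in one path, where Q_l = parts A ! l is the existential component
  containing the initial state.  Condition (2) is stated for trees with directions 'd.\<close>
definition nondet_one_path :: "('a, 'q, 'z) hfta_scheme \<Rightarrow> nat \<Rightarrow> 'd itself \<Rightarrow> bool" where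
  "nondet_one_path A l _ \<longleftrightarrow> is_hfta A \<and> l < length (parts A) \<and>
     init A \<in> parts A ! l \<and> parts A ! l \<in> ex_parts A \<and>
     (\<forall>q\<in>parts A ! l. \<forall>a\<in>alph A. functional_one_dir (states A) (parts A ! l) (delta A q a)) \<and>
     (\<forall>(T::'d list set) Lab. (T, Lab) \<in> lang A \<longrightarrow> (\<forall>\<pi>. inf_path T \<pi> \<longrightarrow>
        (\<exists>Tr Lr. accepting_run A T Lab Tr Lr \<and>
           (\<forall>k. (\<exists>!y. y \<in> Tr \<and> snd (Lr y) = \<pi> k) \<and>
                (\<forall>y\<in>Tr. snd (Lr y) = \<pi> k \<longrightarrow> fst (Lr y) \<in> parts A ! l)))))"

definition exC_aut :: "'ap set \<Rightarrow> 'ap \<Rightarrow> 'q set \<Rightarrow> ('ap set, 'q) hfta \<Rightarrow> ('ap set, 'q) hfta" where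
  "exC_aut AP p Ql A = A\<lparr>alph := Pow (AP - {p}),
      delta := (\<lambda>q a. if q \<in> Ql then Or (delta A q a) (delta A q (insert p a)) else delta A q a)\<rparr>"

end

theory Submission
  imports Defs
begin

(*
  Inclusion from right to left: by condition (2) of nondeterminism in one path, the relabelled
  tree has an accepting run of A in which the nodes of the chosen path are read exactly by
  states of Q_l.  The same run is a run of the projected automaton on the original tree,
  because on the path the letter read by A is a or insert p a, i.e. one of the two
  disjuncts of delta'.

  Inclusion from left to right: in an accepting run of the projected automaton choose, at
  every run node in Q_l, a satisfied disjunct, and use Q_l-functionality to shrink the set
  of successors so that exactly one of them is in Q_l.  Everywhere else the successors can
  be restricted to the lower components, which never lead back to Q_l.  The pruned run then
  has a single chain of Q_l-nodes; it reads an infinite path of the tree, and relabelling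
  this path with the chosen letters turns the pruned run into an accepting run of A.

  Functionality is only given up to fo_equiv, an equivalence over domains of naturals.  It
  is transferred to an arbitrary set of successors S: a formula with K variables cannot
  distinguish S from a finite subset that contains more than K elements of each type it
  does not contain entirely, and a finite domain can be renumbered by naturals.
*)

section \<open>One-step formulas over arbitrary domains\<close>

fun vars :: "'q fo \<Rightarrow> nat set" where
  "vars Top = {}" | "vars Bot = {}" | "vars (Atom q x) = {x}" | "vars (Eq x y) = {x, y}"
| "vars (Neq x y) = {x, y}" | "vars (Or \<phi> \<psi>) = vars \<phi> \<union> vars \<psi>" | "vars (And \<phi> \<psi>) = vars \<phi> \<union> vars \<psi>"
| "vars (Ex x \<phi>) = insert x (vars \<phi>)" | "vars (All x \<phi>) = insert x (vars \<phi>)"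

lemma fv_subset_vars: "fv \<phi> \<subseteq> vars \<phi>"
  by (induction \<phi>) auto

lemma finite_vars: "finite (vars \<phi>)"
  by (induction \<phi>) auto

lemma sat_cong_fv: "(\<And>x. x \<in> fv \<phi> \<Longrightarrow> e x = e' x) \<Longrightarrow> sat S I e \<phi> = sat S I e' \<phi>"
proof (induction \<phi> arbitrary: e e')
  case (Or \<phi> \<psi>)
  have "sat S I e \<phi> = sat S I e' \<phi>" by (rule Or.IH(1)) (use Or.prems in auto)
  moreover have "sat S I e \<psi> = sat S I e' \<psi>" by (rule Or.IH(2)) (use Or.prems in auto)
  ultimately show ?case by simp
next
  case (And \<phi> \<psi>)
  have "sat S I e \<phi> = sat S I e' \<phi>" by (rule And.IH(1)) (use And.prems in auto)
  moreover have "sat S I e \<psi> = sat S I e' \<psi>" by (rule And.IH(2)) (use And.prems in auto)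
  ultimately show ?case by simp
next
  case (Ex x \<phi>)
  have "sat S I (e(x := s)) \<phi> = sat S I (e'(x := s)) \<phi>" for s
    by (rule Ex.IH) (use Ex.prems in auto)
  then show ?case by simp
next
  case (All x \<phi>)
  have "sat S I (e(x := s)) \<phi> = sat S I (e'(x := s)) \<phi>" for s
    by (rule All.IH) (use All.prems in auto)
  then show ?case by simp
qed auto

lemma sat_cong_atoms:
  assumes "\<forall>q\<in>atoms \<phi>. \<forall>s\<in>S. q \<in> I s \<longleftrightarrow> q \<in> I' s" and "\<forall>x. e x \<in> S"
  shows "sat S I e \<phi> = sat S I' e \<phi>"
  using assms by (induction \<phi> arbitrary: e) (auto intro!: bex_cong ball_cong)

lemma sat_inj_image:
  assumes "inj_on h S" and "\<forall>s\<in>S. I' (h s) = I s" and "\<forall>x. e x \<in> S"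
  shows "sat (h ` S) I' (h \<circ> e) \<phi> = sat S I e \<phi>"
  using assms(3)
proof (induction \<phi> arbitrary: e)
  case (Ex x \<phi>)
  have "sat (h ` S) I' (h \<circ> e(x := s)) \<phi> = sat S I (e(x := s)) \<phi>" if "s \<in> S" for s
    by (rule Ex.IH) (use Ex.prems that in auto)
  then show ?case by (auto simp: fun_upd_comp[symmetric] simp del: comp_apply)
next
  case (All x \<phi>)
  have "sat (h ` S) I' (h \<circ> e(x := s)) \<phi> = sat S I (e(x := s)) \<phi>" if "s \<in> S" for s
    by (rule All.IH) (use All.prems that in auto)
  then show ?case by (auto simp: fun_upd_comp[symmetric] simp del: comp_apply)
qed (use assms in \<open>auto dest: inj_onD\<close>)

lemma models_bij_betw:
  assumes h: "bij_betw h S S'" and I': "\<forall>s\<in>S. I' (h s) = I s"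
  shows "models S' I' \<phi> \<longleftrightarrow> models S I \<phi>"
proof -
  have S': "S' = h ` S" and inj: "inj_on h S" using h by (auto simp: bij_betw_def)
  have sat_h: "sat S' I' (h \<circ> e) \<phi> = sat S I e \<phi>" if "\<forall>x. e x \<in> S" for e :: "nat \<Rightarrow> _"
    using sat_inj_image[OF inj I' that] S' by simp
  show ?thesis
  proof
    assume m: "models S' I' \<phi>"
    show "models S I \<phi>"
      unfolding models_def
    proof (intro conjI allI impI)
      show "S \<noteq> {}" using m S' by (auto simp: models_def)
      fix e :: "nat \<Rightarrow> _" assume e: "\<forall>x. e x \<in> S"
      then have "\<forall>x. (h \<circ> e) x \<in> S'" using S' by auto
      then show "sat S I e \<phi>" using m sat_h[OF e] by (simp add: models_def)
    qed
  next
    assume m: "models S I \<phi>"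
    show "models S' I' \<phi>"
      unfolding models_def
    proof (intro conjI allI impI)
      show "S' \<noteq> {}" using m S' by (auto simp: models_def)
      fix e' :: "nat \<Rightarrow> _" assume e': "\<forall>x. e' x \<in> S'"
      define e where "e = inv_into S h \<circ> e'"
      have e: "\<forall>x. e x \<in> S" using e' S' by (auto simp: e_def inv_into_into)
      have "h \<circ> e = e'" using e' S' by (auto simp: e_def f_inv_into_f)
      then show "sat S' I' e' \<phi>" using m sat_h[OF e] e by (simp add: models_def)
    qed
  qed
qed

lemma sat_exchange:
  assumes "s \<in> S" "s' \<in> S" "I s' = I s" "\<forall>y. e y \<in> S"
    and "\<forall>y\<in>fv \<phi> - {x}. e y \<noteq> s \<and> e y \<noteq> s'"
  shows "sat S I (e(x := s)) \<phi> = sat S I (e(x := s')) \<phi>"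
proof -
  \<comment> \<open>The transposition of s and s' is an automorphism of (S, I) fixing the other
    free variables.\<close>
  let ?\<tau> = "id(s := s', s' := s)"
  have "sat (?\<tau> ` S) I (?\<tau> \<circ> e(x := s)) \<phi> = sat S I (e(x := s)) \<phi>"
    by (rule sat_inj_image) (use assms in \<open>auto simp: inj_on_def\<close>)
  moreover have "?\<tau> ` S = S"
    using assms(1,2) by (force simp: image_def)
  moreover have "sat S I (?\<tau> \<circ> e(x := s)) \<phi> = sat S I (e(x := s')) \<phi>"
    by (rule sat_cong_fv) (use assms in auto)
  ultimately show ?thesis using assms by simp
qed

definition type_saturated :: "nat \<Rightarrow> 's set \<Rightarrow> ('s \<Rightarrow> 'q set) \<Rightarrow> 's set \<Rightarrow> bool" where
  "type_saturated K S I S0 \<longleftrightarrow> S0 \<subseteq> S \<and> finite S0 \<and> (\<forall>s\<in>S - S0. K < card {t\<in>S0. I t = I s})"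

lemma exists_type_saturated:
  assumes "finite X" and "X \<subseteq> S" and "finite (I ` S)"
  obtains S0 where "X \<subseteq> S0" and "type_saturated K S I S0"
proof -
  have "\<exists>B. finite B \<and> B \<subseteq> {s\<in>S. I s = c} \<and> ({s\<in>S. I s = c} \<subseteq> B \<or> card B = Suc K)" for c
  proof (cases "finite {s\<in>S. I s = c}")
    case False
    then obtain B where "finite B" "card B = Suc K" "B \<subseteq> {s\<in>S. I s = c}"
      using infinite_arbitrarily_large by blast
    then show ?thesis by blast
  qed (intro exI[of _ "{s\<in>S. I s = c}"], simp)
  then obtain B where B: "\<And>c. finite (B c) \<and> B c \<subseteq> {s\<in>S. I s = c} \<and>
      ({s\<in>S. I s = c} \<subseteq> B c \<or> card (B c) = Suc K)"
    by metis
  define S0 where "S0 = X \<union> \<Union>(B ` I ` S)"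
  have fin: "finite S0"
    unfolding S0_def using B assms(1) finite_imageI[OF assms(3), of B]
    by (intro finite_UnI finite_Union) auto
  have "type_saturated K S I S0"
    unfolding type_saturated_def
  proof (intro conjI ballI)
    show "S0 \<subseteq> S" using B assms unfolding S0_def by blast
    show "finite S0" by (fact fin)
    fix s assume s: "s \<in> S - S0"
    have sub: "B (I s) \<subseteq> {t\<in>S0. I t = I s}" using B s unfolding S0_def by blast
    have "card (B (I s)) = Suc K" using B[of "I s"] s unfolding S0_def by blast
    then show "K < card {t\<in>S0. I t = I s}" using card_mono[OF _ sub] fin by simp
  qed
  then show thesis using that S0_def by blast
qed

lemma type_saturated_representative:
  assumes sat0: "type_saturated (card W) S I S0" and W: "finite W"
    and "fv \<phi> \<subseteq> W" and e: "\<forall>y. e y \<in> S0" and s: "s \<in> S"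
  obtains s0 where "s0 \<in> S0" and "sat S I (e(x := s)) \<phi> = sat S I (e(x := s0)) \<phi>"
proof (cases "s \<in> S0")
  case False
  have "card W < card {t\<in>S0. I t = I s}"
    using sat0 False s unfolding type_saturated_def by blast
  then have "card (e ` W) < card {t\<in>S0. I t = I s}"
    using card_image_le[OF W, of e] by linarith
  then obtain s0 where s0: "s0 \<in> S0" "I s0 = I s" "s0 \<notin> e ` W"
    by (metis (mono_tags, lifting) W card_mono finite_imageI mem_Collect_eq not_le subsetI)
  have "sat S I (e(x := s)) \<phi> = sat S I (e(x := s0)) \<phi>"
    by (rule sat_exchange) (use assms False s0 in \<open>auto simp: type_saturated_def\<close>)
  then show thesis using that s0 by blast
qed (use that in blast)

lemma sat_type_saturated:
  assumes sat0: "type_saturated (card W) S I S0" and W: "finite W"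
  shows "vars \<phi> \<subseteq> W \<Longrightarrow> \<forall>x. e x \<in> S0 \<Longrightarrow> sat S I e \<phi> = sat S0 I e \<phi>"
proof (induction \<phi> arbitrary: e)
  case (Ex x \<phi>)
  have IH: "sat S I (e(x := s)) \<phi> = sat S0 I (e(x := s)) \<phi>" if "s \<in> S0" for s
    by (rule Ex.IH) (use Ex.prems that in auto)
  have "\<exists>s0\<in>S0. sat S I (e(x := s)) \<phi> = sat S I (e(x := s0)) \<phi>" if "s \<in> S" for s
    by (rule type_saturated_representative[OF sat0 W, of \<phi> e s x])
      (use Ex.prems fv_subset_vars that in auto)
  then have "(\<exists>s\<in>S. sat S I (e(x := s)) \<phi>) \<longleftrightarrow> (\<exists>s\<in>S0. sat S I (e(x := s)) \<phi>)"
    using sat0 unfolding type_saturated_def by blast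
  then show ?case using IH by simp
next
  case (All x \<phi>)
  have IH: "sat S I (e(x := s)) \<phi> = sat S0 I (e(x := s)) \<phi>" if "s \<in> S0" for s
    by (rule All.IH) (use All.prems that in auto)
  have "\<exists>s0\<in>S0. sat S I (e(x := s)) \<phi> = sat S I (e(x := s0)) \<phi>" if "s \<in> S" for s
    by (rule type_saturated_representative[OF sat0 W, of \<phi> e s x])
      (use All.prems fv_subset_vars that in auto)
  then have "(\<forall>s\<in>S. sat S I (e(x := s)) \<phi>) \<longleftrightarrow> (\<forall>s\<in>S0. sat S I (e(x := s)) \<phi>)"
    using sat0 unfolding type_saturated_def by blast
  then show ?case using IH by simp
qed auto

lemma models_fo_equiv_finite:
  assumes equiv: "fo_equiv \<phi> \<psi>" and S: "finite S" and m: "models S I \<phi>"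
  shows "models S I \<psi>"
proof -
  obtain h where h: "bij_betw h S {0..<card S}" using ex_bij_betw_finite_nat[OF S] by blast
  define I' where "I' n = I (inv_into S h n)" for n
  have I': "\<forall>s\<in>S. I' (h s) = I s" using h by (simp add: I'_def bij_betw_inv_into_left)
  have "{0..<card S} \<noteq> {}" using m S by (auto simp: models_def card_gt_0_iff)
  then show ?thesis using equiv m models_bij_betw[OF h I'] unfolding fo_equiv_def by blast
qed

lemma models_fo_equiv:
  fixes S :: "'s set"
  assumes equiv: "fo_equiv \<phi> \<psi>" and types: "finite (I ` S)" and m: "models S I \<phi>"
  shows "models S I \<psi>"
  unfolding models_def
proof (intro conjI allI impI)
  show "S \<noteq> {}" using m by (simp add: models_def)
  then obtain s where s: "s \<in> S" by blast
  fix e :: "nat \<Rightarrow> 's" assume e: "\<forall>x. e x \<in> S"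
  define W where "W = vars \<phi> \<union> vars \<psi>"
  have W: "finite W" by (simp add: W_def finite_vars)
  obtain S0 where S0: "insert s (e ` W) \<subseteq> S0" "type_saturated (card W) S I S0"
    using exists_type_saturated[of "insert s (e ` W)" S I] W e s types by blast
  have S0S: "S0 \<subseteq> S" "finite S0" using S0(2) unfolding type_saturated_def by auto
  have restrict: "sat S I e' \<chi> = sat S0 I e' \<chi>" if "vars \<chi> \<subseteq> W" "\<forall>x. e' x \<in> S0" for \<chi> e'
    using sat_type_saturated[OF S0(2) W that] .
  have "models S0 I \<phi>"
    using m restrict S0S S0(1) unfolding models_def W_def by blast
  then have m0: "models S0 I \<psi>" using models_fo_equiv_finite[OF equiv S0S(2)] by blast
  define e0 where "e0 x = (if x \<in> W then e x else s)" for x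
  have e0: "\<forall>x. e0 x \<in> S0" using S0(1) by (auto simp: e0_def)
  have "sat S I e \<psi> = sat S I e0 \<psi>"
    by (rule sat_cong_fv) (use fv_subset_vars in \<open>auto simp: e0_def W_def\<close>)
  also have "\<dots> = sat S0 I e0 \<psi>" using restrict e0 W_def by auto
  finally show "sat S I e \<psi>" using m0 e0 by (simp add: models_def)
qed

section \<open>Basic formulas and functionality\<close>

lemma sat_big_and: "sat S I e (big_and \<phi>s) \<longleftrightarrow> (\<forall>\<phi>\<in>set \<phi>s. sat S I e \<phi>)"
  by (induction \<phi>s rule: big_and.induct) auto

lemma sat_big_or: "sat S I e (big_or \<phi>s) \<longleftrightarrow> (\<exists>\<phi>\<in>set \<phi>s. sat S I e \<phi>)"
  by (induction \<phi>s rule: big_or.induct) auto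

lemma sat_type_fo:
  assumes "finite A"
  shows "sat S I e (type_fo A x) \<longleftrightarrow> A \<subseteq> I (e x)"
proof -
  have "set (SOME qs. set qs = A \<and> distinct qs) = A"
    using someI_ex[OF finite_distinct_list[OF assms]] by blast
  then show ?thesis unfolding type_fo_def sat_big_and by auto
qed

lemma sat_diff_fo:
  "sat S I e (diff_fo zs) \<longleftrightarrow> (\<forall>i<length zs. \<forall>j<length zs. i \<noteq> j \<longrightarrow> e (zs ! i) \<noteq> e (zs ! j))"
  unfolding diff_fo_def sat_big_and by auto

lemma sat_foldr_Ex:
  "distinct xs \<Longrightarrow> sat S I e (foldr Ex xs \<phi>) \<longleftrightarrow>
     (\<exists>g. (\<forall>x\<in>set xs. g x \<in> S) \<and> sat S I (override_on e g (set xs)) \<phi>)"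
proof (induction xs arbitrary: e)
  case (Cons x xs)
  have upd: "override_on f (g(x := s)) (set xs) = override_on f g (set xs)" for f g s
    using Cons.prems by (auto simp: override_on_def)
  show ?case
  proof
    assume "sat S I e (foldr Ex (x # xs) \<phi>)"
    then obtain s where s: "s \<in> S" "sat S I (e(x := s)) (foldr Ex xs \<phi>)" by auto
    then obtain g where "\<forall>y\<in>set xs. g y \<in> S" "sat S I (override_on (e(x := s)) g (set xs)) \<phi>"
      using Cons.IH[of "e(x := s)"] Cons.prems s(2) by (meson distinct.simps(2))
    then show "\<exists>g. (\<forall>y\<in>set (x # xs). g y \<in> S) \<and> sat S I (override_on e g (set (x # xs))) \<phi>"
      using s by (intro exI[of _ "g(x := s)"]) (simp add: override_on_insert' upd)
  next
    assume "\<exists>g. (\<forall>y\<in>set (x # xs). g y \<in> S) \<and> sat S I (override_on e g (set (x # xs))) \<phi>"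
    then show "sat S I e (foldr Ex (x # xs) \<phi>)"
      using Cons by (auto simp: override_on_insert')
  qed
qed simp

definition basic_holds :: "'s set \<Rightarrow> ('s \<Rightarrow> 'q set) \<Rightarrow> 'q set list \<Rightarrow> 'q set list \<Rightarrow> bool" where
  "basic_holds S I Te Tf \<longleftrightarrow> (\<exists>g. g ` {..<length Te} \<subseteq> S \<and> inj_on g {..<length Te} \<and>
     (\<forall>i<length Te. Te ! i \<subseteq> I (g i)) \<and>
     (\<forall>s\<in>S - g ` {..<length Te}. \<exists>A\<in>set Tf. A \<subseteq> I s))"

lemma sat_basic_fo:
  assumes fin: "\<forall>A\<in>set Te \<union> set Tf. finite A"
  shows "sat S I e (basic_fo Te Tf) \<longleftrightarrow> basic_holds S I Te Tf"
proof -
  define n where "n = length Te"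
  have "sat S I e (basic_fo Te Tf) \<longleftrightarrow> (\<exists>g. (\<forall>i\<in>{..<n}. g i \<in> S) \<and>
      (\<forall>i<n. \<forall>j<n. i \<noteq> j \<longrightarrow> g i \<noteq> g j) \<and> (\<forall>i\<in>{..<n}. Te ! i \<subseteq> I (g i)) \<and>
      (\<forall>s\<in>S. (\<exists>A\<in>set Tf. A \<subseteq> I s) \<or> (\<exists>i\<in>{..<n}. s = g i)))"
    unfolding basic_fo_def Let_def n_def[symmetric]
    using fin by (simp add: sat_foldr_Ex sat_big_and sat_big_or sat_diff_fo sat_type_fo
        n_def[symmetric] atLeast0LessThan)
  also have "\<dots> \<longleftrightarrow> basic_holds S I Te Tf"
  proof -
    have "(\<forall>i\<in>{..<n}. g i \<in> S) \<longleftrightarrow> g ` {..<n} \<subseteq> S"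
      and "(\<forall>i<n. \<forall>j<n. i \<noteq> j \<longrightarrow> g i \<noteq> g j) \<longleftrightarrow> inj_on g {..<n}"
      and "(\<forall>i\<in>{..<n}. Te ! i \<subseteq> I (g i)) \<longleftrightarrow> (\<forall>i<n. Te ! i \<subseteq> I (g i))"
      and "(\<forall>s\<in>S. (\<exists>A\<in>set Tf. A \<subseteq> I s) \<or> (\<exists>i\<in>{..<n}. s = g i)) \<longleftrightarrow>
        (\<forall>s\<in>S - g ` {..<n}. \<exists>A\<in>set Tf. A \<subseteq> I s)" for g
      unfolding inj_on_def by auto
    then show ?thesis unfolding basic_holds_def n_def[symmetric] by (simp only:)
  qed
  finally show ?thesis .
qed

lemma models_big_or_basic_fo:
  assumes "\<And>Te Tf A. (Te, Tf) \<in> set bs \<Longrightarrow> A \<in> set Te \<union> set Tf \<Longrightarrow> finite A"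
  shows "models S I (big_or (map (\<lambda>(Te, Tf). basic_fo Te Tf) bs)) \<longleftrightarrow>
    S \<noteq> {} \<and> (\<exists>(Te, Tf)\<in>set bs. basic_holds S I Te Tf)"
proof -
  have "sat S I e (big_or (map (\<lambda>(Te, Tf). basic_fo Te Tf) bs)) \<longleftrightarrow>
      (\<exists>(Te, Tf)\<in>set bs. basic_holds S I Te Tf)" for e
  proof -
    have "sat S I e (basic_fo Te Tf) \<longleftrightarrow> basic_holds S I Te Tf" if "(Te, Tf) \<in> set bs" for Te Tf
      using assms that by (intro sat_basic_fo) auto
    then show ?thesis unfolding sat_big_or by force
  qed
  then show ?thesis unfolding models_def by auto
qed

definition functional_interp :: "'q set \<Rightarrow> 's set \<Rightarrow> ('s \<Rightarrow> 'q set) \<Rightarrow> bool" where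
  "functional_interp Q' S J \<longleftrightarrow> (\<exists>s0\<in>S. \<exists>q\<in>Q'. J s0 = {q} \<and> (\<forall>s\<in>S - {s0}. J s \<inter> Q' = {}))"

lemma functional_interp_unique:
  assumes "functional_interp Q' S J"
    and "s1 \<in> S" "q1 \<in> J s1 \<inter> Q'" and "s2 \<in> S" "q2 \<in> J s2"
  shows "q2 \<in> Q' \<longleftrightarrow> s2 = s1" and "s2 = s1 \<Longrightarrow> q2 = q1"
proof -
  obtain s0 q0 where s0: "s0 \<in> S" "J s0 = {q0}" "\<forall>s\<in>S - {s0}. J s \<inter> Q' = {}"
    using assms(1) unfolding functional_interp_def by blast
  then have "s1 = s0" using assms(2,3) by blast
  with s0 assms(3-5) show "q2 \<in> Q' \<longleftrightarrow> s2 = s1" and "s2 = s1 \<Longrightarrow> q2 = q1" by auto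
qed

lemma basic_holds_shrink:
  assumes "basic_holds S I Te Tf"
  obtains g J where "g ` {..<length Te} \<subseteq> S" and "\<forall>i<length Te. J (g i) = Te ! i"
    and "\<forall>s\<in>S - g ` {..<length Te}. J s \<in> set Tf"
    and "\<forall>s\<in>S. J s \<subseteq> I s" and "basic_holds S J Te Tf"
proof -
  let ?N = "{..<length Te}"
  obtain g where g_inj: "inj_on g ?N" and g_S: "g ` ?N \<subseteq> S"
    and g_Te: "\<forall>i<length Te. Te ! i \<subseteq> I (g i)"
    and g_Tf: "\<forall>s\<in>S - g ` ?N. \<exists>A\<in>set Tf. A \<subseteq> I s"
    using assms unfolding basic_holds_def by blast
  define J where "J s = (if s \<in> g ` ?N then Te ! the_inv_into ?N g s
      else (SOME A. A \<in> set Tf \<and> A \<subseteq> I s))" for s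
  have J_g: "\<forall>i<length Te. J (g i) = Te ! i"
    using the_inv_into_f_f[OF g_inj] by (simp add: J_def)
  have J_Tf: "J s \<in> set Tf \<and> J s \<subseteq> I s" if "s \<in> S - g ` ?N" for s
  proof -
    have "\<exists>A. A \<in> set Tf \<and> A \<subseteq> I s" using that g_Tf by blast
    from someI_ex[OF this] show ?thesis using that by (simp add: J_def)
  qed
  have J_I: "\<forall>s\<in>S. J s \<subseteq> I s"
  proof
    fix s assume s: "s \<in> S"
    show "J s \<subseteq> I s"
    proof (cases "s \<in> g ` ?N")
      case True
      then obtain i where "i < length Te" "s = g i" by auto
      then show ?thesis using J_g g_Te by simp
    next
      case False
      then show ?thesis using J_Tf s by blast
    qed
  qed
  have J_Tf': "\<forall>s\<in>S - g ` ?N. J s \<in> set Tf" using J_Tf by blast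
  have "basic_holds S J Te Tf"
    unfolding basic_holds_def
  proof (intro exI conjI)
    show "g ` ?N \<subseteq> S" "inj_on g ?N" by (fact g_S, fact g_inj)
    show "\<forall>i<length Te. Te ! i \<subseteq> J (g i)" using J_g by simp
    show "\<forall>s\<in>S - g ` ?N. \<exists>A\<in>set Tf. A \<subseteq> J s" using J_Tf' by blast
  qed
  from that[OF g_S J_g J_Tf' J_I this] show thesis .
qed

lemma basic_holds_functional_shrink:
  assumes bf: "basic_functional Q Q' Te Tf" and holds: "basic_holds S I Te Tf"
  obtains J where "\<forall>s\<in>S. J s \<subseteq> I s" and "basic_holds S J Te Tf" and "functional_interp Q' S J"
proof -
  obtain g J where g_S: "g ` {..<length Te} \<subseteq> S" and J_g: "\<forall>i<length Te. J (g i) = Te ! i"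
    and J_Tf: "\<forall>s\<in>S - g ` {..<length Te}. J s \<in> set Tf"
    and J: "\<forall>s\<in>S. J s \<subseteq> I s" "basic_holds S J Te Tf"
    using basic_holds_shrink[OF holds] by blast
  obtain i0 q where i0: "i0 < length Te" "Te ! i0 = {q}" "q \<in> Q'"
    and disj: "\<forall>B\<in>(set Te - {{q}}) \<union> set Tf. B \<inter> Q' = {}" and dist: "distinct Te"
    using bf unfolding basic_functional_def by (metis in_set_conv_nth)
  have "J s \<inter> Q' = {}" if "s \<in> S - {g i0}" for s
  proof (cases "s \<in> g ` {..<length Te}")
    case True
    then obtain i where i: "i < length Te" "s = g i" by blast
    then have "i \<noteq> i0" using that by blast
    then have "Te ! i \<noteq> Te ! i0" using dist i(1) i0(1) by (simp add: nth_eq_iff_index_eq)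
    then show ?thesis using disj i i0 J_g by auto
  next
    case False
    then show ?thesis using that J_Tf disj by blast
  qed
  then have "functional_interp Q' S J"
    unfolding functional_interp_def using g_S i0 J_g by blast
  with J that show thesis by blast
qed

lemma functional_one_dir_shrink:
  assumes fun1: "functional_one_dir Q Q' \<phi>" and Q: "finite Q"
    and I: "\<forall>s\<in>S. I s \<subseteq> Q" and m: "models S I \<phi>"
  obtains J where "\<forall>s\<in>S. J s \<subseteq> I s" and "models S J \<phi>" and "functional_interp Q' S J"
proof -
  obtain bs where bs: "\<forall>(Te, Tf)\<in>set bs. basic_functional Q Q' Te Tf"
    and equiv: "fo_equiv \<phi> (big_or (map (\<lambda>(Te, Tf). basic_fo Te Tf) bs))"
    using fun1 unfolding functional_one_dir_def by blast
  have bf: "basic_functional Q Q' Te Tf" if "(Te, Tf) \<in> set bs" for Te Tf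
    using bs that by auto
  have fin: "finite A" if "(Te, Tf) \<in> set bs" "A \<in> set Te \<union> set Tf" for Te Tf A
  proof -
    have "A \<subseteq> Q" using bf[OF that(1)] that(2) unfolding basic_functional_def by blast
    then show ?thesis using Q finite_subset by blast
  qed
  have basics: "models S J' (big_or (map (\<lambda>(Te, Tf). basic_fo Te Tf) bs)) \<longleftrightarrow>
      S \<noteq> {} \<and> (\<exists>(Te, Tf)\<in>set bs. basic_holds S J' Te Tf)" for J'
    by (rule models_big_or_basic_fo) (fact fin)
  have types: "finite (I' ` S)" if "\<forall>s\<in>S. I' s \<subseteq> Q" for I' :: "_ \<Rightarrow> _ set"
    using that Q by (auto intro: finite_subset[of _ "Pow Q"])
  have "models S I (big_or (map (\<lambda>(Te, Tf). basic_fo Te Tf) bs))"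
    by (rule models_fo_equiv[OF equiv types[OF I] m])
  then have "S \<noteq> {} \<and> (\<exists>(Te, Tf)\<in>set bs. basic_holds S I Te Tf)"
    by (rule basics[THEN iffD1])
  then obtain Te Tf where S: "S \<noteq> {}" and Te: "(Te, Tf) \<in> set bs" "basic_holds S I Te Tf"
    by auto
  obtain J where J: "\<forall>s\<in>S. J s \<subseteq> I s" "basic_holds S J Te Tf" "functional_interp Q' S J"
    using basic_holds_functional_shrink[OF bf[OF Te(1)] Te(2)] by blast
  have "models S J (big_or (map (\<lambda>(Te, Tf). basic_fo Te Tf) bs))"
    by (rule basics[THEN iffD2]) (use S J(2) Te(1) in blast)
  moreover have "fo_equiv (big_or (map (\<lambda>(Te, Tf). basic_fo Te Tf) bs)) \<phi>"
    using equiv unfolding fo_equiv_def by blast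
  moreover have "\<forall>s\<in>S. J s \<subseteq> Q" using J(1) I by blast
  ultimately have "models S J \<phi>"
    using models_fo_equiv types by blast
  with J that show thesis by blast
qed

lemma models_OrI: "models S I \<phi> \<or> models S I \<psi> \<Longrightarrow> models S I (Or \<phi> \<psi>)"
  unfolding models_def by auto

lemma models_closed:
  assumes "fv \<phi> = {}" and "s \<in> S"
  shows "models S I \<phi> \<longleftrightarrow> sat S I (\<lambda>_. s) \<phi>"
proof -
  have "sat S I e \<phi> = sat S I (\<lambda>_. s) \<phi>" for e
    by (rule sat_cong_fv) (use assms(1) in auto)
  then show ?thesis using assms(2) unfolding models_def by auto
qed

lemma models_OrD:
  assumes "fv \<phi> = {}" and "fv \<psi> = {}" and "models S I (Or \<phi> \<psi>)"
  shows "models S I \<phi> \<or> models S I \<psi>"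
proof -
  obtain s where s: "s \<in> S" using assms(3) unfolding models_def by blast
  have "sat S I (\<lambda>_. s) (Or \<phi> \<psi>)" using assms(3) s unfolding models_def by simp
  then show ?thesis using models_closed[OF assms(1) s] models_closed[OF assms(2) s] by simp
qed

lemma models_cong_atoms:
  assumes "\<forall>q\<in>atoms \<phi>. \<forall>s\<in>S. q \<in> I s \<longleftrightarrow> q \<in> I' s" and "models S I \<phi>"
  shows "models S I' \<phi>"
  using assms sat_cong_atoms unfolding models_def by blast

section \<open>Hierarchical automata and their runs\<close>

lemma is_disj_atoms: "is_disj P \<phi> \<Longrightarrow> (\<And>\<psi>. P \<psi> \<Longrightarrow> atoms \<psi> \<subseteq> X) \<Longrightarrow> atoms \<phi> \<subseteq> X"
  by (induction rule: is_disj.induct) auto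

lemma is_conj_atoms: "is_conj P \<phi> \<Longrightarrow> (\<And>\<psi>. P \<psi> \<Longrightarrow> atoms \<psi> \<subseteq> X) \<Longrightarrow> atoms \<phi> \<subseteq> X"
  by (induction rule: is_conj.induct) auto

lemma atoms_delta_component:
  assumes A: "is_hfta A" and j: "j < length (parts A)" and q: "q \<in> parts A ! j" and a: "a \<in> alph A"
  shows "atoms (delta A q a) \<subseteq> parts A ! j \<union> lower A j"
proof -
  consider "existential_comp A j" | "universal_comp A j" | "transient_comp A j"
    using A j unfolding is_hfta_def by blast
  then show ?thesis
  proof cases
    case 1
    then have "is_disj (\<lambda>\<phi>. \<exists>x q' \<theta>. \<phi> = Ex x (And (Atom q' x) \<theta>) \<and>
        q' \<in> parts A ! j \<and> atoms \<theta> \<subseteq> lower A j) (delta A q a)"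
      using q a unfolding existential_comp_def by blast
    then show ?thesis by (rule is_disj_atoms) auto
  next
    case 2
    then have "is_conj (\<lambda>\<phi>. \<exists>x q' \<theta>. \<phi> = All x (Or (Atom q' x) \<theta>) \<and>
        q' \<in> parts A ! j \<and> atoms \<theta> \<subseteq> lower A j) (delta A q a)"
      using q a unfolding universal_comp_def by blast
    then show ?thesis by (rule is_conj_atoms) auto
  next
    case 3
    then show ?thesis using q a unfolding transient_comp_def by blast
  qed
qed

lemma atoms_delta_lower:
  assumes A: "is_hfta A" and l: "l < length (parts A)" and q: "q \<in> lower A l" and a: "a \<in> alph A"
  shows "atoms (delta A q a) \<subseteq> lower A l"
proof -
  obtain j where j: "j < l" "q \<in> parts A ! j" using q unfolding lower_def by blast
  have "atoms (delta A q a) \<subseteq> parts A ! j \<union> lower A j"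
    using atoms_delta_component[OF A _ j(2) a] j l by simp
  also have "\<dots> \<subseteq> lower A l" using j(1) unfolding lower_def by auto (meson lessThan_iff less_trans)
  finally show ?thesis .
qed

lemma component_disjoint_lower:
  assumes "is_hfta A" and "l < length (parts A)"
  shows "parts A ! l \<inter> lower A l = {}"
proof -
  have "\<forall>i<length (parts A). \<forall>j<length (parts A). i \<noteq> j \<longrightarrow> parts A ! i \<inter> parts A ! j = {}"
    using assms(1) unfolding is_hfta_def by blast
  then have "parts A ! l \<inter> parts A ! j = {}" if "j < l" for j using that assms(2) by simp
  then show ?thesis unfolding lower_def by blast
qed

lemma children_subset: "children T w \<subseteq> T"
  unfolding children_def by auto

definition child_states :: "('q \<times> 'e) list set \<Rightarrow> (('q \<times> 'e) list \<Rightarrow> 'q \<times> 'd list)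
    \<Rightarrow> ('q \<times> 'e) list \<Rightarrow> 'd list \<Rightarrow> 'q set" where
  "child_states Tr Lr y w = {q. (q, w) \<in> Lr ` children Tr y}"

lemma is_runD:
  assumes "is_run A T Lab Tr Lr" and "y \<in> Tr"
  shows "Lr y \<in> states A \<times> T"
    and "\<forall>w\<in>children T (snd (Lr y)). child_states Tr Lr y w \<subseteq> states A"
    and "models (children T (snd (Lr y))) (child_states Tr Lr y) (delta A (fst (Lr y)) (Lab (snd (Lr y))))"
    and "Lr ` children Tr y = {(q, w). w \<in> children T (snd (Lr y)) \<and> q \<in> child_states Tr Lr y w}"
proof -
  obtain I where I: "\<forall>w\<in>children T (snd (Lr y)). I w \<subseteq> states A"
    "models (children T (snd (Lr y))) I (delta A (fst (Lr y)) (Lab (snd (Lr y))))"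
    "Lr ` children Tr y = {(q, w). w \<in> children T (snd (Lr y)) \<and> q \<in> I w}"
    and "Lr y \<in> states A \<times> T"
    using assms unfolding is_run_def by blast
  moreover have "\<forall>w\<in>children T (snd (Lr y)). child_states Tr Lr y w = I w"
    using I(3) unfolding child_states_def by auto
  ultimately show "Lr y \<in> states A \<times> T"
    and "\<forall>w\<in>children T (snd (Lr y)). child_states Tr Lr y w \<subseteq> states A"
    and "models (children T (snd (Lr y))) (child_states Tr Lr y) (delta A (fst (Lr y)) (Lab (snd (Lr y))))"
    and "Lr ` children Tr y = {(q, w). w \<in> children T (snd (Lr y)) \<and> q \<in> child_states Tr Lr y w}"
    by (auto intro: models_cong_atoms)
qed

lemma is_run_transfer:
  assumes run: "is_run A T Lab Tr Lr" and "states B = states A" and "init B = init A"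
    and step: "\<And>y I. y \<in> Tr \<Longrightarrow>
      models (children T (snd (Lr y))) I (delta A (fst (Lr y)) (Lab (snd (Lr y)))) \<Longrightarrow>
      models (children T (snd (Lr y))) I (delta B (fst (Lr y)) (Lab' (snd (Lr y))))"
  shows "is_run B T Lab' Tr Lr"
  unfolding is_run_def
proof (intro conjI ballI exI)
  show "is_tree Tr" "Lr [] = (init B, [])" using run assms(3) unfolding is_run_def by auto
  fix y assume y: "y \<in> Tr"
  show "Lr y \<in> states B \<times> T" using is_runD(1)[OF run y] assms(2) by simp
  show "child_states Tr Lr y w \<subseteq> states B" if "w \<in> children T (snd (Lr y))" for w
    using is_runD(2)[OF run y] assms(2) that by simp
  show "models (children T (snd (Lr y))) (child_states Tr Lr y) (delta B (fst (Lr y)) (Lab' (snd (Lr y))))"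
    by (rule step[OF y is_runD(3)[OF run y]])
  show "Lr ` children Tr y = {(q, w). w \<in> children T (snd (Lr y)) \<and> q \<in> child_states Tr Lr y w}"
    by (rule is_runD(4)[OF run y])
qed

lemma accepting_run_subtree:
  assumes acc: "accepting_run A T Lab Tr Lr" and run: "is_run B T Lab' Tr' Lr"
    and sub: "Tr' \<subseteq> Tr" and colour: "colour B = colour A"
  shows "accepting_run B T Lab' Tr' Lr"
proof -
  have "inf_path Tr \<rho>" if "inf_path Tr' \<rho>" for \<rho>
    using that sub unfolding inf_path_def children_def by blast
  then show ?thesis using acc run colour unfolding accepting_run_def by simp
qed

lemma exC_aut_simps [simp]:
  "states (exC_aut AP p Ql A) = states A" "init (exC_aut AP p Ql A) = init A"
  "colour (exC_aut AP p Ql A) = colour A" "alph (exC_aut AP p Ql A) = Pow (AP - {p})"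
  "delta (exC_aut AP p Ql A) q a =
     (if q \<in> Ql then Or (delta A q a) (delta A q (insert p a)) else delta A q a)"
  unfolding exC_aut_def by simp_all

lemma nondet_one_path_run:
  fixes T :: "'d list set"
  assumes "nondet_one_path A l TYPE('d)" and "(T, Lab) \<in> lang A" and "inf_path T \<pi>"
  obtains Tr Lr where "accepting_run A T Lab Tr Lr"
    and "\<forall>k. \<forall>y\<in>Tr. snd (Lr y) = \<pi> k \<longrightarrow> fst (Lr y) \<in> parts A ! l"
  \<comment> \<open>Condition (2) is the last conjunct of nondet_one_path.\<close>
  using assms(1)[unfolded nondet_one_path_def, THEN conjunct2, THEN conjunct2, THEN conjunct2,
      THEN conjunct2, THEN conjunct2, rule_format, OF assms(2,3)] that
  by blast

lemma chain_proj_subset_lang_exC: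
  assumes nondet: "nondet_one_path A l TYPE('d)"
  shows "chain_proj AP p (lang A)
    \<subseteq> (lang (exC_aut AP p (parts A ! l) A) :: ('d list set \<times> ('d list \<Rightarrow> 'ap set)) set)"
proof
  let ?E = "exC_aut AP p (parts A ! l) A"
  fix x :: "'d list set \<times> ('d list \<Rightarrow> 'ap set)"
  assume "x \<in> chain_proj AP p (lang A)"
  then obtain T Lab \<pi> Lab' where x: "x = (T, Lab)" and kt: "kripke_tree (AP - {p}) T Lab"
    and \<pi>: "inf_path T \<pi>" and L': "(T, Lab') \<in> lang A"
    and off: "\<forall>w\<in>T. w \<notin> range \<pi> \<longrightarrow> Lab' w = Lab w"
    and on: "\<forall>w\<in>T. w \<in> range \<pi> \<longrightarrow> Lab' w - {p} = Lab w"
    unfolding chain_proj_def by blast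
  obtain Tr Lr where acc: "accepting_run A T Lab' Tr Lr"
    and on_Ql: "\<forall>k. \<forall>y\<in>Tr. snd (Lr y) = \<pi> k \<longrightarrow> fst (Lr y) \<in> parts A ! l"
    using nondet_one_path_run[OF nondet L' \<pi>] by blast
  have run: "is_run A T Lab' Tr Lr" using acc unfolding accepting_run_def by blast
  have Lab: "\<forall>w\<in>T. Lab w \<subseteq> AP - {p}" using kt unfolding kripke_tree_def by blast
  have step: "models S I (delta ?E (fst (Lr y)) (Lab (snd (Lr y))))"
    if y: "y \<in> Tr" and m: "models S I (delta A (fst (Lr y)) (Lab' (snd (Lr y))))" for y S I
  proof -
    have w: "snd (Lr y) \<in> T" using is_runD(1)[OF run y] by auto
    show ?thesis
    proof (cases "snd (Lr y) \<in> range \<pi>")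
      case True
      then have "fst (Lr y) \<in> parts A ! l" using on_Ql y by force
      moreover have "Lab' (snd (Lr y)) \<in> {Lab (snd (Lr y)), insert p (Lab (snd (Lr y)))}"
        using on True Lab w by blast
      ultimately show ?thesis using m by (auto intro!: models_OrI)
    next
      case False
      then show ?thesis using m off w by (auto intro!: models_OrI)
    qed
  qed
  have "is_run ?E T Lab Tr Lr" by (rule is_run_transfer[OF run _ _ step]) simp_all
  then have "accepting_run ?E T Lab Tr Lr"
    by (rule accepting_run_subtree[OF acc _ order_refl]) simp
  moreover have "non_blocking T" using kt unfolding kripke_tree_def by blast
  ultimately show "x \<in> lang ?E" using Lab unfolding x lang_def by auto
qed

section \<open>Pruning an accepting run of the projected automaton\<close>

locale exC_accepting_run =
  fixes AP :: "'ap set" and p :: 'ap and A :: "('ap set, 'q) hfta" and l :: nat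
    and T :: "'d list set" and Lab :: "'d list \<Rightarrow> 'ap set"
    and Tr :: "('q \<times> 'd) list set" and Lr :: "('q \<times> 'd) list \<Rightarrow> 'q \<times> 'd list"
  assumes p_in_AP: "p \<in> AP" and alph_A: "alph A = Pow AP"
    and hfta: "is_hfta A" and l_less: "l < length (parts A)" and init_in_Ql: "init A \<in> parts A ! l"
    and functional:
      "\<forall>q\<in>parts A ! l. \<forall>a\<in>alph A. functional_one_dir (states A) (parts A ! l) (delta A q a)"
    and non_blocking_T: "non_blocking T" and Lab_in: "\<forall>w\<in>T. Lab w \<subseteq> AP - {p}"
    and accepting: "accepting_run (exC_aut AP p (parts A ! l) A) T Lab Tr Lr"
begin

abbreviation "Ql \<equiv> parts A ! l"
abbreviation "L \<equiv> lower A l"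
abbreviation "E \<equiv> exC_aut AP p Ql A"
abbreviation "dirs y \<equiv> children T (snd (Lr y))"

lemma run: "is_run E T Lab Tr Lr"
  using accepting unfolding accepting_run_def by blast

lemma Lr_Nil: "Lr [] = (init A, [])"
  using run unfolding is_run_def by simp

lemma tree_Tr: "is_tree Tr"
  using run unfolding is_run_def by blast

lemma Tr_prefix: "y @ v \<in> Tr \<Longrightarrow> y \<in> Tr"
  using tree_Tr unfolding is_tree_def by blast

lemma Nil_in_Tr: "[] \<in> Tr"
  using tree_Tr unfolding is_tree_def by (metis append_Nil ex_in_conv)

lemma Lr_in: "y \<in> Tr \<Longrightarrow> Lr y \<in> states A \<times> T"
  using is_runD(1)[OF run] by simp

lemma finite_states: "finite (states A)"
  using hfta unfolding is_hfta_def wf_fta_def by blast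

lemma delta_closed: "q \<in> states A \<Longrightarrow> a \<in> alph A \<Longrightarrow> fv (delta A q a) = {}"
  using hfta unfolding is_hfta_def wf_fta_def by blast

definition choice_ok :: "('q \<times> 'd) list \<Rightarrow> 'ap set \<Rightarrow> ('d list \<Rightarrow> 'q set) \<Rightarrow> bool" where
  "choice_ok y a J \<longleftrightarrow> a \<in> {Lab (snd (Lr y)), insert p (Lab (snd (Lr y)))} \<and>
     (\<forall>w\<in>dirs y. J w \<subseteq> child_states Tr Lr y w \<inter> (Ql \<union> L)) \<and>
     models (dirs y) J (delta A (fst (Lr y)) a) \<and> functional_interp Ql (dirs y) J"

lemma choice_ok_exists:
  assumes y: "y \<in> Tr" and q: "fst (Lr y) \<in> Ql"
  shows "\<exists>a J. choice_ok y a J"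
proof -
  let ?q = "fst (Lr y)" and ?w = "snd (Lr y)"
  have letters: "Lab ?w \<in> alph A" "insert p (Lab ?w) \<in> alph A"
    using Lr_in[OF y] Lab_in p_in_AP alph_A by auto
  have closed: "fv (delta A ?q a) = {}" if "a \<in> alph A" for a
    using delta_closed Lr_in[OF y] that by auto
  have "models (dirs y) (child_states Tr Lr y) (Or (delta A ?q (Lab ?w)) (delta A ?q (insert p (Lab ?w))))"
    using is_runD(3)[OF run y] q by simp
  from models_OrD[OF closed[OF letters(1)] closed[OF letters(2)] this]
  obtain a where a: "a \<in> {Lab ?w, insert p (Lab ?w)}"
    and m: "models (dirs y) (child_states Tr Lr y) (delta A ?q a)"
    by blast
  have "a \<in> alph A" using a letters by blast
  then have "functional_one_dir (states A) Ql (delta A ?q a)" using functional q by blast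
  moreover have "\<forall>w\<in>dirs y. child_states Tr Lr y w \<subseteq> states A"
    using is_runD(2)[OF run y] by simp
  ultimately obtain J0 where J0: "\<forall>w\<in>dirs y. J0 w \<subseteq> child_states Tr Lr y w"
    "models (dirs y) J0 (delta A ?q a)" "functional_interp Ql (dirs y) J0"
    using functional_one_dir_shrink[OF _ finite_states _ m] by blast
  define J where "J w = J0 w \<inter> (Ql \<union> L)" for w
  have "atoms (delta A ?q a) \<subseteq> Ql \<union> L"
    using atoms_delta_component[OF hfta l_less q \<open>a \<in> alph A\<close>] .
  then have "models (dirs y) J (delta A ?q a)"
    by (intro models_cong_atoms[OF _ J0(2)]) (auto simp: J_def)
  moreover obtain s0 q0 where "s0 \<in> dirs y" "q0 \<in> Ql" "J0 s0 = {q0}"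
    and "\<forall>s\<in>dirs y - {s0}. J0 s \<inter> Ql = {}"
    using J0(3) unfolding functional_interp_def by blast
  then have "functional_interp Ql (dirs y) J"
    unfolding functional_interp_def J_def by (intro bexI[of _ s0] bexI[of _ q0]) auto
  moreover have "\<forall>w\<in>dirs y. J w \<subseteq> child_states Tr Lr y w \<inter> (Ql \<union> L)"
    using J0(1) by (auto simp: J_def)
  ultimately have "choice_ok y a J" unfolding choice_ok_def using a by blast
  then show ?thesis by blast
qed

definition chosen :: "('q \<times> 'd) list \<Rightarrow> 'ap set \<times> ('d list \<Rightarrow> 'q set)" where
  "chosen y = (SOME aJ. choice_ok y (fst aJ) (snd aJ))"

lemma choice_ok_chosen:
  assumes "y \<in> Tr" and "fst (Lr y) \<in> Ql"
  shows "choice_ok y (fst (chosen y)) (snd (chosen y))"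
proof -
  obtain a J where "choice_ok y a J" using choice_ok_exists[OF assms] by blast
  then have "\<exists>aJ. choice_ok y (fst aJ) (snd aJ)" by auto
  then show ?thesis unfolding chosen_def by (rule someI_ex)
qed

text \<open>Outside Q_l the run is in a lower component (pruned_states), whose transitions only
  mention lower states; restricting the successors to them keeps the pruned run out of Q_l.\<close>

definition kept_states :: "('q \<times> 'd) list \<Rightarrow> 'd list \<Rightarrow> 'q set" where
  "kept_states y = (if fst (Lr y) \<in> Ql then snd (chosen y) else (\<lambda>w. child_states Tr Lr y w \<inter> L))"

definition kept_labels :: "('q \<times> 'd) list \<Rightarrow> ('q \<times> 'd list) set" where
  "kept_labels y = {(q, w). w \<in> dirs y \<and> q \<in> kept_states y w}"

lemma kept_states_subset:
  "y \<in> Tr \<Longrightarrow> w \<in> dirs y \<Longrightarrow> kept_states y w \<subseteq> child_states Tr Lr y w \<inter> (Ql \<union> L)"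
  using choice_ok_chosen unfolding kept_states_def choice_ok_def by auto

lemma kept_labels_subset: "y \<in> Tr \<Longrightarrow> kept_labels y \<subseteq> Lr ` children Tr y"
  using kept_states_subset is_runD(4)[OF run] unfolding kept_labels_def by blast

lemma kept_labels_lower: "(q, w) \<in> kept_labels y \<Longrightarrow> fst (Lr y) \<notin> Ql \<Longrightarrow> q \<in> L"
  unfolding kept_labels_def kept_states_def by simp

lemma functional_kept_states:
  "y \<in> Tr \<Longrightarrow> fst (Lr y) \<in> Ql \<Longrightarrow> functional_interp Ql (dirs y) (kept_states y)"
  using choice_ok_chosen unfolding kept_states_def choice_ok_def by simp

lemma Ql_kept_label_unique:
  assumes "y \<in> Tr" "fst (Lr y) \<in> Ql" and "(q1, w1) \<in> kept_labels y" "q1 \<in> Ql"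
    and "(q2, w2) \<in> kept_labels y"
  shows "q2 \<in> Ql \<longleftrightarrow> w2 = w1" and "w2 = w1 \<Longrightarrow> q2 = q1"
proof -
  have "w1 \<in> dirs y" "q1 \<in> kept_states y w1 \<inter> Ql" "w2 \<in> dirs y" "q2 \<in> kept_states y w2"
    using assms(3-5) unfolding kept_labels_def by auto
  note unique = functional_interp_unique[OF functional_kept_states[OF assms(1,2)] this]
  show "q2 \<in> Ql \<longleftrightarrow> w2 = w1" by (fact unique(1))
  show "w2 = w1 \<Longrightarrow> q2 = q1" by (fact unique(2))
qed

primrec chain :: "nat \<Rightarrow> ('q \<times> 'd) list" where
  "chain 0 = []"
| "chain (Suc k) =
     (SOME y'. y' \<in> children Tr (chain k) \<and> Lr y' \<in> kept_labels (chain k) \<and> fst (Lr y') \<in> Ql)"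

declare chain.simps(2) [simp del]

lemma Ql_successor_exists:
  assumes "y \<in> Tr" and "fst (Lr y) \<in> Ql"
  shows "\<exists>y'. y' \<in> children Tr y \<and> Lr y' \<in> kept_labels y \<and> fst (Lr y') \<in> Ql"
proof -
  obtain w0 q0 where "w0 \<in> dirs y" "kept_states y w0 = {q0}" "q0 \<in> Ql"
    using functional_kept_states[OF assms] unfolding functional_interp_def by blast
  then have "(q0, w0) \<in> Lr ` children Tr y \<inter> kept_labels y"
    using kept_labels_subset[OF assms(1)] unfolding kept_labels_def by blast
  then show ?thesis using \<open>q0 \<in> Ql\<close> by (metis IntE fst_conv imageE)
qed

lemma chain_Suc_step:
  assumes "chain k \<in> Tr" and "fst (Lr (chain k)) \<in> Ql"
  shows "chain (Suc k) \<in> children Tr (chain k) \<and> Lr (chain (Suc k)) \<in> kept_labels (chain k) \<and>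
    fst (Lr (chain (Suc k))) \<in> Ql"
  unfolding chain.simps(2) by (rule someI_ex[OF Ql_successor_exists[OF assms]])

lemma chain_in_Tr: "chain k \<in> Tr" "fst (Lr (chain k)) \<in> Ql"
proof (induction k)
  case 0
  show "chain 0 \<in> Tr" "fst (Lr (chain 0)) \<in> Ql" using Nil_in_Tr Lr_Nil init_in_Ql by simp_all
next
  case (Suc k)
  show "chain (Suc k) \<in> Tr" "fst (Lr (chain (Suc k))) \<in> Ql"
    using chain_Suc_step[OF Suc] children_subset by blast+
qed

lemma chain_Suc:
  "chain (Suc k) \<in> children Tr (chain k)" "Lr (chain (Suc k)) \<in> kept_labels (chain k)"
  using chain_Suc_step[OF chain_in_Tr] by blast+

lemma chain_Suc_snoc: "\<exists>d. chain (Suc k) = chain k @ [d]"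
  using chain_Suc(1) unfolding children_def by blast

lemma length_chain: "length (chain k) = k"
proof (induction k)
  case (Suc k)
  obtain d where "chain (Suc k) = chain k @ [d]" using chain_Suc_snoc by blast
  then show ?case using Suc.IH by simp
qed simp

text \<open>A Q_l-successor is kept only if it is the next node of the chain: two run nodes of Q_l
  reading the same tree node could have chosen different letters.\<close>

definition pruned :: "('q \<times> 'd) list set" where
  "pruned = {y \<in> Tr. \<forall>i<length y. Lr (take (Suc i) y) \<in> kept_labels (take i y) \<and>
     (fst (Lr (take (Suc i) y)) \<in> Ql \<longrightarrow> take (Suc i) y = chain (Suc i))}"

lemma pruned_subset: "pruned \<subseteq> Tr"
  unfolding pruned_def by blast

lemma Nil_in_pruned: "[] \<in> pruned"
  unfolding pruned_def using Nil_in_Tr by simp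

lemma snoc_in_pruned:
  "y @ [d] \<in> pruned \<longleftrightarrow> y \<in> pruned \<and> y @ [d] \<in> Tr \<and> Lr (y @ [d]) \<in> kept_labels y \<and>
     (fst (Lr (y @ [d])) \<in> Ql \<longrightarrow> y @ [d] = chain (Suc (length y)))"
  unfolding pruned_def using Tr_prefix
  by (auto simp: less_Suc_eq)

lemma pruned_prefix: "y @ v \<in> pruned \<Longrightarrow> y \<in> pruned"
  by (induction v rule: rev_induct) (simp, metis append_assoc snoc_in_pruned)

lemma chain_in_pruned: "chain k \<in> pruned"
proof (induction k)
  case (Suc k)
  obtain d where d: "chain (Suc k) = chain k @ [d]" using chain_Suc_snoc by blast
  have "chain k @ [d] \<in> pruned"
    unfolding snoc_in_pruned
    using Suc.IH chain_in_Tr(1)[of "Suc k"] chain_Suc(2)[of k] length_chain[of k] d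
    by simp
  then show ?case using d by simp
qed (simp add: Nil_in_pruned)

lemma pruned_Ql_chain: "y \<in> pruned \<Longrightarrow> fst (Lr y) \<in> Ql \<Longrightarrow> chain (length y) = y"
  by (cases y rule: rev_exhaust) (auto simp: snoc_in_pruned length_chain)

lemma pruned_states: "y \<in> pruned \<Longrightarrow> fst (Lr y) \<in> Ql \<union> L"
proof (cases y rule: rev_exhaust)
  case (snoc z d)
  assume "y \<in> pruned"
  then have "z \<in> Tr" "Lr y \<in> kept_labels z" using snoc snoc_in_pruned pruned_subset by auto
  then show ?thesis
    using kept_states_subset unfolding kept_labels_def by (cases "Lr y") auto
qed (simp add: Lr_Nil init_in_Ql)

lemma Lr_children_pruned:
  assumes y: "y \<in> pruned"
  shows "Lr ` children pruned y = kept_labels y"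
proof
  show "Lr ` children pruned y \<subseteq> kept_labels y"
    using snoc_in_pruned unfolding children_def by auto
  show "kept_labels y \<subseteq> Lr ` children pruned y"
  proof
    fix lab assume lab: "lab \<in> kept_labels y"
    have yTr: "y \<in> Tr" using y pruned_subset by blast
    show "lab \<in> Lr ` children pruned y"
    proof (cases "fst lab \<in> Ql")
      case True
      have "fst (Lr y) \<in> Ql"
      proof (rule ccontr)
        assume "fst (Lr y) \<notin> Ql"
        then have "fst lab \<in> L" using kept_labels_lower[of "fst lab" "snd lab" y] lab by simp
        then show False using component_disjoint_lower[OF hfta l_less] True by blast
      qed
      then have yc: "chain (length y) = y" using pruned_Ql_chain y by simp
      let ?y' = "chain (Suc (length y))"
      have y'_label: "Lr ?y' \<in> kept_labels y"
        using chain_Suc(2)[of "length y"] by (simp only: yc)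
      obtain q w q' w' where qw: "lab = (q, w)" and q'w': "Lr ?y' = (q', w')" by fastforce
      have "q' \<in> Ql" using chain_in_Tr(2)[of "Suc (length y)"] q'w' by simp
      then have "w = w'" "q = q'"
        using Ql_kept_label_unique[of y q' w' q w] yTr \<open>fst (Lr y) \<in> Ql\<close>
          y'_label lab True qw q'w' by auto
      then have "lab = Lr ?y'" using qw q'w' by simp
      moreover obtain d where "?y' = y @ [d]" using chain_Suc_snoc[of "length y"] by (auto simp only: yc)
      then have "?y' \<in> children pruned y"
        using chain_in_pruned[of "Suc (length y)"] unfolding children_def by (cases d) auto
      ultimately show ?thesis by blast
    next
      case False
      obtain d where d: "y @ [d] \<in> Tr" "Lr (y @ [d]) = lab"
        using kept_labels_subset[OF yTr] lab unfolding children_def by blast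
      then have "y @ [d] \<in> pruned" using False y lab snoc_in_pruned by simp
      then have "y @ [d] \<in> children pruned y" unfolding children_def by blast
      then show ?thesis using d(2) by blast
    qed
  qed
qed

lemma length_dir: "y \<in> Tr \<Longrightarrow> length (snd (Lr y)) = length y"
proof (induction y rule: rev_induct)
  case (snoc d y)
  then have "y \<in> Tr" "y @ [d] \<in> children Tr y" using Tr_prefix unfolding children_def by blast+
  then have "Lr (y @ [d]) \<in> Lr ` children Tr y" by blast
  then have "snd (Lr (y @ [d])) \<in> dirs y" unfolding is_runD(4)[OF run \<open>y \<in> Tr\<close>] by auto
  then show ?case using snoc \<open>y \<in> Tr\<close> unfolding children_def by auto
qed (simp add: Lr_Nil)

definition path :: "nat \<Rightarrow> 'd list" where
  "path k = snd (Lr (chain k))"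

lemma path_Suc: "path (Suc k) \<in> children T (path k)"
  using chain_Suc(2)[of k] unfolding path_def kept_labels_def by (cases "Lr (chain (Suc k))") auto

lemma inf_path_path: "inf_path T path"
  unfolding inf_path_def using path_Suc Lr_Nil by (simp add: path_def)

lemma length_path: "length (path k) = k"
  using length_dir[OF chain_in_Tr(1)] length_chain unfolding path_def by simp

lemma pruned_reads_length:
  assumes "y \<in> pruned" and "snd (Lr y) = path k"
  shows "length y = k"
proof -
  have "y \<in> Tr" using assms(1) pruned_subset by blast
  then show ?thesis using length_dir assms(2) length_path by metis
qed

lemma pruned_reads_path: "y \<in> pruned \<Longrightarrow> snd (Lr y) = path k \<Longrightarrow> y = chain k"
proof (induction k arbitrary: y)
  case 0
  then show ?case using pruned_reads_length[OF 0] by simp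
next
  case (Suc k)
  obtain z d where y: "y = z @ [d]"
    using pruned_reads_length[OF Suc.prems] by (metis length_Suc_conv_rev)
  have z: "z \<in> pruned" "Lr y \<in> kept_labels z"
    using Suc.prems(1)[unfolded y snoc_in_pruned] y by simp_all
  have "snd (Lr y) \<in> children T (snd (Lr z))"
    using z(2) unfolding kept_labels_def by (cases "Lr y") auto
  then obtain e where "snd (Lr y) = snd (Lr z) @ [e]" unfolding children_def by blast
  moreover obtain e' where "path (Suc k) = path k @ [e']"
    using path_Suc[of k] unfolding children_def by blast
  ultimately have "snd (Lr z) = path k" using Suc.prems(2) by simp
  then have zc: "z = chain k" using Suc.IH z(1) by blast
  obtain q1 w1 where c: "Lr (chain (Suc k)) = (q1, w1)" by fastforce
  have "q1 \<in> Ql" "(q1, w1) \<in> kept_labels z" "w1 = snd (Lr y)"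
    using chain_in_Tr(2)[of "Suc k"] chain_Suc(2)[of k] zc c Suc.prems(2) unfolding path_def
    by simp_all
  then have "fst (Lr y) \<in> Ql"
    using Ql_kept_label_unique(1)[of z q1 w1 "fst (Lr y)" "snd (Lr y)"] chain_in_Tr[of k] zc z(2)
    by simp
  then have "y = chain (Suc (length z))" using Suc.prems(1)[unfolded y snoc_in_pruned] y by simp
  then show ?case using zc length_chain by simp
qed

definition relabel :: "'d list \<Rightarrow> 'ap set" where
  "relabel w = (if w \<in> range path then fst (chosen (chain (length w))) else Lab w)"

lemma relabel_path: "relabel (path k) = fst (chosen (chain k))"
  unfolding relabel_def using length_path by auto

lemma relabel_path_cases: "relabel (path k) \<in> {Lab (path k), insert p (Lab (path k))}"
  using relabel_path choice_ok_chosen[OF chain_in_Tr] unfolding choice_ok_def path_def by simp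

lemma models_kept_states:
  assumes y: "y \<in> pruned"
  shows "models (dirs y) (kept_states y) (delta A (fst (Lr y)) (relabel (snd (Lr y))))"
proof -
  have yTr: "y \<in> Tr" using y pruned_subset by blast
  show ?thesis
  proof (cases "fst (Lr y) \<in> Ql")
    case True
    then have yc: "chain (length y) = y" using pruned_Ql_chain y by simp
    have "snd (Lr y) = path (length y)" unfolding path_def by (simp only: yc)
    then have "relabel (snd (Lr y)) = fst (chosen y)" using relabel_path[of "length y"] yc by simp
    then show ?thesis
      using choice_ok_chosen[OF yTr True] True unfolding choice_ok_def kept_states_def by simp
  next
    case False
    then have q: "fst (Lr y) \<in> L" using pruned_states y by blast
    have "snd (Lr y) \<notin> range path"
    proof
      assume "snd (Lr y) \<in> range path"
      then obtain k where "snd (Lr y) = path k" by blast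
      then have "y = chain k" by (rule pruned_reads_path[OF y])
      then show False using chain_in_Tr(2)[of k] False by simp
    qed
    then have relabel: "relabel (snd (Lr y)) = Lab (snd (Lr y))" by (simp add: relabel_def)
    have "Lab (snd (Lr y)) \<in> alph A" using Lr_in[OF yTr] Lab_in alph_A by auto
    then have atoms: "atoms (delta A (fst (Lr y)) (Lab (snd (Lr y)))) \<subseteq> L"
      using atoms_delta_lower[OF hfta l_less q] by blast
    have "models (dirs y) (child_states Tr Lr y) (delta A (fst (Lr y)) (Lab (snd (Lr y))))"
      using is_runD(3)[OF run yTr] False by simp
    then have "models (dirs y) (kept_states y) (delta A (fst (Lr y)) (Lab (snd (Lr y))))"
      by (rule models_cong_atoms[rotated]) (use atoms False in \<open>auto simp: kept_states_def\<close>)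
    then show ?thesis using relabel by simp
  qed
qed

lemma run_pruned: "is_run A T relabel pruned Lr"
  unfolding is_run_def
proof (intro conjI ballI exI)
  show "is_tree pruned" unfolding is_tree_def using Nil_in_pruned pruned_prefix by blast
  show "Lr [] = (init A, [])" by (fact Lr_Nil)
  fix y assume y: "y \<in> pruned"
  then have yTr: "y \<in> Tr" using pruned_subset by blast
  show "Lr y \<in> states A \<times> T" using Lr_in[OF yTr] .
  show "kept_states y w \<subseteq> states A" if "w \<in> dirs y" for w
    using kept_states_subset[OF yTr that] is_runD(2)[OF run yTr] that by auto
  show "Lr ` children pruned y = {(q, w). w \<in> dirs y \<and> q \<in> kept_states y w}"
    using Lr_children_pruned[OF y] unfolding kept_labels_def .
  show "models (dirs y) (kept_states y) (delta A (fst (Lr y)) (relabel (snd (Lr y))))"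
    by (rule models_kept_states[OF y])
qed

lemma in_chain_proj: "(T, Lab) \<in> chain_proj AP p (lang A)"
proof -
  have on_path: "relabel w \<in> {Lab w, insert p (Lab w)}" if "w \<in> range path" for w
    using that relabel_path_cases by auto
  have "relabel w \<in> alph A" if "w \<in> T" for w
  proof (cases "w \<in> range path")
    case True
    then have "relabel w = Lab w \<or> relabel w = insert p (Lab w)" using on_path by simp
    moreover have "Lab w \<subseteq> AP" using Lab_in that by blast
    ultimately show ?thesis using p_in_AP alph_A by auto
  next
    case False
    then show ?thesis using that Lab_in alph_A by (auto simp: relabel_def)
  qed
  moreover have "accepting_run A T relabel pruned Lr"
    by (rule accepting_run_subtree[OF accepting run_pruned pruned_subset]) simp
  ultimately have "(T, relabel) \<in> lang A" unfolding lang_def using non_blocking_T by blast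
  moreover have "\<forall>w\<in>T. w \<in> range path \<longrightarrow> relabel w - {p} = Lab w"
    using on_path Lab_in by auto
  moreover have "\<forall>w\<in>T. w \<notin> range path \<longrightarrow> relabel w = Lab w"
    by (simp add: relabel_def)
  moreover have "kripke_tree (AP - {p}) T Lab"
    unfolding kripke_tree_def using non_blocking_T Lab_in by blast
  ultimately show ?thesis
    unfolding chain_proj_def mem_Collect_eq prod.case using inf_path_path by blast
qed

end

lemma lang_exC_subset_chain_proj:
  assumes "p \<in> AP" and "alph A = Pow AP" and "is_hfta A" and "l < length (parts A)"
    and "init A \<in> parts A ! l"
    and "\<forall>q\<in>parts A ! l. \<forall>a\<in>alph A. functional_one_dir (states A) (parts A ! l) (delta A q a)"
  shows "lang (exC_aut AP p (parts A ! l) A) \<subseteq> chain_proj AP p (lang A)"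
proof
  fix x assume "x \<in> lang (exC_aut AP p (parts A ! l) A)"
  then obtain T Lab Tr Lr where x: "x = (T, Lab)" and "non_blocking T"
    and "\<forall>w\<in>T. Lab w \<in> Pow (AP - {p})"
    and "accepting_run (exC_aut AP p (parts A ! l) A) T Lab Tr Lr"
    unfolding lang_def by auto
  then interpret exC_accepting_run AP p A l T Lab Tr Lr
    by unfold_locales (use assms in auto)
  show "x \<in> chain_proj AP p (lang A)" using in_chain_proj x by simp
qed

lemma nondet_one_pathD:
  assumes "nondet_one_path A l TYPE('d)"
  shows "is_hfta A" and "l < length (parts A)" and "init A \<in> parts A ! l"
    and "\<forall>q\<in>parts A ! l. \<forall>a\<in>alph A. functional_one_dir (states A) (parts A ! l) (delta A q a)"
  using assms unfolding nondet_one_path_def by simp_all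

theorem proposition14:
  fixes AP :: "'ap set" and p :: 'ap and A :: "('ap set, 'q) hfta" and l :: nat
  assumes "finite AP" and "p \<in> AP"
    and "alph A = Pow AP"
    and "nondet_one_path A l TYPE('d)"
  shows "(lang (exC_aut AP p (parts A ! l) A) :: ('d list set \<times> ('d list \<Rightarrow> 'ap set)) set)
           = chain_proj AP p (lang A)"
proof (rule subset_antisym)
  show "lang (exC_aut AP p (parts A ! l) A) \<subseteq> chain_proj AP p (lang A)"
    using lang_exC_subset_chain_proj[OF assms(2,3) nondet_one_pathD[OF assms(4)]] .
  show "chain_proj AP p (lang A)
      \<subseteq> (lang (exC_aut AP p (parts A ! l) A) :: ('d list set \<times> ('d list \<Rightarrow> 'ap set)) set)"
    using chain_proj_subset_lang_exC[OF assms(4)] .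
qed

end
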